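(* Assume the setting of the following posterior concentration framework: $f:[0,\infty)\to(0,\infty)$ is continuous, non-increasing, with $\lim_{u\to\infty}f(au)/f(u)=0$ for every $a>1$ and $\int f(\eta'W(P)\eta)\,d\eta<\infty$; $\pi_\theta$ is a continuous probability density on $\mathbb R^p$ with $\pi_\theta(\theta_W(P))>0$; and for $c>0$, \[ \pi_c(\theta\mid P)=\frac{\pi_\theta(\theta)\,f\bigl(\tfrac1cQ_W(\theta;P)\bigr)}{\int\pi_\theta(\vartheta)\,f\bigl(\tfrac1cQ_W(\vartheta;P)\bigr)d\vartheta}. \] Let $\mathcal A$ be a set of actions, $L:\mathcal A\times\mathbb R^p\to\mathbb R$ a loss, and let $\delta_{\pi_c}(P)\in\arg\min_{a\in\mathcal A}\int L(a,\theta)\,d\pi_c(\theta\mid P)$. Suppose that $\mathcal A$ is compact under some metric $d$, that $\sup_{a,\theta}L(a,\theta)<\infty$, that $\sup_\theta|L(a,\theta)-L(a',\theta)|<\lambda\, d(a,a')$ for all $a,a'\in\mathcal A$ and some $\lambda>0$, that $L(a,\cdot)$ is continuous for all $a\in\mathcal A$, and that $a\mapsto L(a,\theta)$ has a unique minimizer over $\mathcal A$ for every $\theta$. Then as $c\to0$, \[ \delta_{\pi_c}(P)\to\arg\min_{a\in\mathcal A}L(a,\theta_W(P)). \]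
   Context: Let $\mathcal P$ be a set of probability distributions; $P\in\mathcal P$ is observed. Fix integers $k>p\ge1$. $Y(P)\in\mathbb R^k$, $X(P)\in\mathbb R^{k\times p}$ of full column rank, and a symmetric positive definite $k\times k$ matrix $W(P)$ are known. Define $Q_W(\theta;P)=(Y(P)-X(P)\theta)'W(P)(Y(P)-X(P)\theta)$ and the pseudo-true value $\theta_W(P)=(X(P)'W(P)X(P))^{-1}X(P)'W(P)Y(P)$, the minimizer of $Q_W(\cdot;P)$. In the paper, $\pi_c(\cdot\mid P)$ is the posterior for $\theta$ under a prior satisfying a minimum-distance sufficiency condition and a rotation-invariant, mean-zero, thin-tailed misspecification prior $\pi_{\eta,c}(\eta\mid\theta)\propto f(\tfrac1c\eta'W(P)\eta)$ for $\eta=Y(P)-X(P)\theta$, which gives exactly the displayed formula. *)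

theory Defs
  imports "HOL-Analysis.Analysis"
begin

definition QW :: "real^'k \<Rightarrow> real^'p^'k \<Rightarrow> real^'k^'k \<Rightarrow> real^'p \<Rightarrow> real" where
  "QW Y X W \<theta> = (Y - X *v \<theta>) \<bullet> (W *v (Y - X *v \<theta>))"

definition thetaW :: "real^'k \<Rightarrow> real^'p^'k \<Rightarrow> real^'k^'k \<Rightarrow> real^'p" where
  "thetaW Y X W = matrix_inv (transpose X ** W ** X) *v (transpose X *v (W *v Y))"

definition post :: "(real \<Rightarrow> real) \<Rightarrow> (real^'p \<Rightarrow> real) \<Rightarrow> real^'k \<Rightarrow> real^'p^'k \<Rightarrow> real^'k^'k
    \<Rightarrow> real \<Rightarrow> real^'p \<Rightarrow> real" where
  "post f prior Y X W c \<theta> =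
     prior \<theta> * f (QW Y X W \<theta> / c) /
     (\<integral>t. prior t * f (QW Y X W t / c) \<partial>lborel)"

definition post_risk :: "('a \<Rightarrow> real^'p \<Rightarrow> real) \<Rightarrow> (real \<Rightarrow> real) \<Rightarrow> (real^'p \<Rightarrow> real)
    \<Rightarrow> real^'k \<Rightarrow> real^'p^'k \<Rightarrow> real^'k^'k \<Rightarrow> real \<Rightarrow> 'a \<Rightarrow> real" where
  "post_risk L f prior Y X W c a = (\<integral>\<theta>. L a \<theta> * post f prior Y X W c \<theta> \<partial>lborel)"

end

(* The posterior risk R_c(a) = int L(a, theta) pi_c(theta | P) dtheta is lambda-Lipschitz in a,
   uniformly in c, and for fixed a it tends to L(a, theta_W) as c -> 0 because the posterior
   concentrates at theta_W: since Q_W(theta_W + z) = Q_W(theta_W) + (Xz)'W(Xz), the minimum of Q_W is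
   well separated, so off a ball around theta_W the unnormalised posterior is at most f(u2/c) times the
   prior, while its total mass is at least a constant times f(u1/c) for some Q_W(theta_W) < u1 < u2;
   the thin-tail condition sends f(u2/c) / f(u1/c) to 0. On the compact set A equi-Lipschitz pointwise
   convergence is uniform, and minimisers of uniformly convergent functions converge to the unique
   minimiser of the limit. *)

theory Submission
  imports Defs
begin

section \<open>Minimisers of uniformly convergent functions\<close>

lemma uniform_limit_equi_lipschitz:
  fixes R :: "'c \<Rightarrow> 'a::metric_space \<Rightarrow> real"
  assumes "compact A"
    and R_lip: "\<forall>\<^sub>F c in F. lipschitz_on lam A (R c)"
    and G_lip: "lipschitz_on lam A G"
    and pointwise: "\<And>a. a \<in> A \<Longrightarrow> ((\<lambda>c. R c a) \<longlongrightarrow> G a) F"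
  shows "uniform_limit A R G F"
  unfolding uniform_limit_iff
proof (intro allI impI)
  fix e :: real assume "e > 0"
  have "lam \<ge> 0" using G_lip by (rule lipschitz_on_nonneg)
  define \<rho> where "\<rho> = e / (3 * (lam + 1))"
  have \<rho>: "\<rho> > 0" "lam * \<rho> \<le> e / 3"
    using \<open>e > 0\<close> \<open>lam \<ge> 0\<close> by (auto simp: \<rho>_def field_simps)
  obtain T where T: "T \<subseteq> A" "finite T" "A \<subseteq> (\<Union>b\<in>T. ball b \<rho>)"
    using compactE_image[OF \<open>compact A\<close>, of A "\<lambda>b. ball b \<rho>"] \<rho>(1) by force
  have "\<forall>b\<in>T. \<forall>\<^sub>F c in F. dist (R c b) (G b) < e / 3"
  proof
    fix b assume "b \<in> T"
    with T(1) have "b \<in> A" by blast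
    have "e / 3 > 0" using \<open>e > 0\<close> by simp
    with pointwise[OF \<open>b \<in> A\<close>] show "\<forall>\<^sub>F c in F. dist (R c b) (G b) < e / 3"
      by (rule tendstoD)
  qed
  then have "\<forall>\<^sub>F c in F. \<forall>b\<in>T. dist (R c b) (G b) < e / 3"
    by (rule eventually_ball_finite[OF T(2)])
  with R_lip show "\<forall>\<^sub>F c in F. \<forall>a\<in>A. dist (R c a) (G a) < e"
  proof eventually_elim
    case (elim c)
    show ?case
    proof
      fix a assume "a \<in> A"
      then obtain b where "b \<in> T" "a \<in> ball b \<rho>" using T(3) by blast
      then have b: "b \<in> T" "dist b a < \<rho>" by simp_all
      have "b \<in> A" using b(1) T(1) by blast
      have "lam * dist b a \<le> e / 3"
        using mult_left_mono[OF less_imp_le[OF b(2)] \<open>lam \<ge> 0\<close>] \<rho>(2) by linarith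
      then have "lam * dist a b \<le> e / 3" "lam * dist b a \<le> e / 3"
        by (simp_all add: dist_commute)
      moreover have "dist (R c a) (R c b) \<le> lam * dist a b" "dist (G b) (G a) \<le> lam * dist b a"
        using lipschitz_onD[OF elim(1)] lipschitz_onD[OF G_lip] \<open>a \<in> A\<close> \<open>b \<in> A\<close> by auto
      moreover have "dist (R c a) (G a) \<le> dist (R c a) (R c b) + dist (R c b) (G b) + dist (G b) (G a)"
        using dist_triangle[of "R c a" "G a" "R c b"] dist_triangle[of "R c b" "G a" "G b"] by linarith
      moreover have "dist (R c b) (G b) < e / 3" using elim(2) b(1) by blast
      ultimately show "dist (R c a) (G a) < e" by linarith
    qed
  qed
qed

lemma tendsto_argmin_uniform_limit:
  fixes R :: "'c \<Rightarrow> 'a::metric_space \<Rightarrow> real"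
  assumes "compact A" and "continuous_on A G" and "uniform_limit A R G F"
    and a0: "a0 \<in> A" "\<And>a. a \<in> A \<Longrightarrow> G a0 \<le> G a"
    and unique: "\<And>a. a \<in> A \<Longrightarrow> \<forall>b\<in>A. G a \<le> G b \<Longrightarrow> a = a0"
    and \<delta>: "\<forall>\<^sub>F c in F. \<delta> c \<in> A \<and> (\<forall>a\<in>A. R c (\<delta> c) \<le> R c a)"
  shows "(\<delta> \<longlongrightarrow> a0) F"
proof (rule tendstoI)
  fix \<epsilon> :: real assume "\<epsilon> > 0"
  define K where "K = A \<inter> {a. \<epsilon> \<le> dist a a0}"
  show "\<forall>\<^sub>F c in F. dist (\<delta> c) a0 < \<epsilon>"
  proof (cases "K = {}")
    case True
    show ?thesis using \<delta> by (rule eventually_mono) (use True in \<open>auto simp: K_def\<close>)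
  next
    case False
    have "compact K"
      unfolding K_def by (intro compact_Int_closed \<open>compact A\<close> closed_Collect_le continuous_intros)
    moreover have "continuous_on K G"
      using \<open>continuous_on A G\<close> by (rule continuous_on_subset) (auto simp: K_def)
    ultimately obtain am where am: "am \<in> K" "\<And>a. a \<in> K \<Longrightarrow> G am \<le> G a"
      using continuous_attains_inf[OF _ False] by blast
    have "G a0 < G am"
    proof (rule ccontr)
      assume "\<not> G a0 < G am"
      with a0(2) have "\<forall>b\<in>A. G am \<le> G b" by (meson not_less order_trans)
      with am(1) have "am = a0" by (intro unique) (auto simp: K_def)
      with am(1) \<open>\<epsilon> > 0\<close> show False by (simp add: K_def)
    qed
    define \<eta> where "\<eta> = (G am - G a0) / 2"
    have \<eta>: "\<eta> > 0" "G a0 + 2 * \<eta> = G am"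
      using \<open>G a0 < G am\<close> by (simp_all add: \<eta>_def field_simps)
    from \<eta>(1) \<open>uniform_limit A R G F\<close> have "\<forall>\<^sub>F c in F. \<forall>a\<in>A. dist (R c a) (G a) < \<eta>"
      unfolding uniform_limit_iff by blast
    with \<delta> show ?thesis
    proof eventually_elim
      case (elim c)
      show ?case
      proof (rule ccontr)
        assume "\<not> dist (\<delta> c) a0 < \<epsilon>"
        with elim(1) have "\<delta> c \<in> K" by (auto simp: K_def)
        have "G (\<delta> c) - \<eta> < R c (\<delta> c)" "R c a0 < G a0 + \<eta>"
          using elim a0(1) by (auto simp: dist_real_def abs_less_iff)
        moreover have "R c (\<delta> c) \<le> R c a0" "G am \<le> G (\<delta> c)"
          using elim(1) a0(1) am(2) \<open>\<delta> c \<in> K\<close> by auto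
        ultimately show False using \<eta>(2) by linarith
      qed
    qed
  qed
qed

section \<open>Integrals against concentrating probability densities\<close>

definition prob_density :: "'a measure \<Rightarrow> ('a \<Rightarrow> real) \<Rightarrow> bool" where
  "prob_density M p \<longleftrightarrow> (\<forall>x. 0 \<le> p x) \<and> integrable M p \<and> (\<integral>x. p x \<partial>M) = 1"

lemma integrable_bounded_mult:
  fixes h p :: "'a \<Rightarrow> real"
  assumes "integrable M p" "h \<in> borel_measurable M" "\<And>x. \<bar>h x\<bar> \<le> B"
  shows "integrable M (\<lambda>x. h x * p x)"
proof (rule Bochner_Integration.integrable_bound)
  show "integrable M (\<lambda>x. B * \<bar>p x\<bar>)"
    using assms(1) by (intro integrable_mult_right integrable_abs)
  show "(\<lambda>x. h x * p x) \<in> borel_measurable M"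
    by (intro borel_measurable_times assms(2) borel_measurable_integrable[OF assms(1)])
  have "B \<ge> 0" using abs_ge_zero assms(3) by (rule order_trans)
  with assms(3) show "AE x in M. norm (h x * p x) \<le> norm (B * \<bar>p x\<bar>)"
    by (intro AE_I2) (simp add: abs_mult mult_right_mono)
qed

lemma abs_integral_le_integral:
  fixes f g :: "'a \<Rightarrow> real"
  assumes "integrable M f" "integrable M g" "\<And>x. \<bar>f x\<bar> \<le> g x"
  shows "\<bar>\<integral>x. f x \<partial>M\<bar> \<le> (\<integral>x. g x \<partial>M)"
proof -
  have fg: "f x \<le> g x" "- f x \<le> g x" for x
    using assms(3)[of x] by (simp_all add: abs_le_iff)
  have "(\<integral>x. f x \<partial>M) \<le> (\<integral>x. g x \<partial>M)"
    using assms(1,2) fg(1) by (rule integral_mono)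
  moreover have "(\<integral>x. - f x \<partial>M) \<le> (\<integral>x. g x \<partial>M)"
    using integrable_minus[OF assms(1)] assms(2) fg(2) by (rule integral_mono)
  ultimately show ?thesis by (simp add: abs_le_iff)
qed

lemma lipschitz_on_integral_prob_density:
  fixes h :: "'b::metric_space \<Rightarrow> 'a \<Rightarrow> real"
  assumes "prob_density M p"
    and meas: "\<And>a. a \<in> A \<Longrightarrow> h a \<in> borel_measurable M"
    and bdd: "\<And>a x. a \<in> A \<Longrightarrow> \<bar>h a x\<bar> \<le> B"
    and lip: "\<And>x. lipschitz_on lam A (\<lambda>a. h a x)"
  shows "lipschitz_on lam A (\<lambda>a. \<integral>x. h a x * p x \<partial>M)"
proof (rule lipschitz_onI[OF _ lipschitz_on_nonneg[OF lip]])
  fix a b assume "a \<in> A" "b \<in> A"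
  have p: "\<And>x. 0 \<le> p x" "integrable M p" "(\<integral>x. p x \<partial>M) = 1"
    using assms(1) by (auto simp: prob_density_def)
  have int: "integrable M (\<lambda>x. h a x * p x)" "integrable M (\<lambda>x. h b x * p x)"
    using p(2) meas bdd \<open>a \<in> A\<close> \<open>b \<in> A\<close> by (auto intro: integrable_bounded_mult)
  have "dist (\<integral>x. h a x * p x \<partial>M) (\<integral>x. h b x * p x \<partial>M) = \<bar>\<integral>x. h a x * p x - h b x * p x \<partial>M\<bar>"
    using int by (simp add: dist_real_def)
  also have "\<dots> \<le> (\<integral>x. lam * dist a b * p x \<partial>M)"
  proof (rule abs_integral_le_integral)
    show "integrable M (\<lambda>x. h a x * p x - h b x * p x)" using int by simp
    show "integrable M (\<lambda>x. lam * dist a b * p x)" using p(2) by simp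
    fix x
    have "\<bar>h a x - h b x\<bar> * p x \<le> lam * dist a b * p x"
      using lipschitz_onD[OF lip \<open>a \<in> A\<close> \<open>b \<in> A\<close>] p(1)
      by (intro mult_right_mono) (simp_all add: dist_real_def)
    then show "\<bar>h a x * p x - h b x * p x\<bar> \<le> lam * dist a b * p x"
      using p(1) by (simp add: abs_mult left_diff_distrib[symmetric])
  qed
  also have "\<dots> = lam * dist a b" using p(3) by simp
  finally show "dist (\<integral>x. h a x * p x \<partial>M) (\<integral>x. h b x * p x \<partial>M) \<le> lam * dist a b" .
qed

lemma integrable_lborel_has_integral_nonneg:
  fixes f :: "'a::euclidean_space \<Rightarrow> real"
  assumes "f \<in> borel_measurable borel" "\<And>x. 0 \<le> f x" "(f has_integral I) UNIV"
  shows "integrable lborel f"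
proof -
  have "integral\<^sup>N lborel f = ennreal I"
    using assms by (rule nn_integral_has_integral_lborel)
  then show ?thesis
    using assms(1,2) by (intro integrableI_nn_integral_finite[where x=I]) auto
qed

lemma dist_integral_prob_density_le:
  fixes p h :: "'a::metric_space \<Rightarrow> real"
  assumes "sets M = sets borel" and p: "prob_density M p"
    and h_meas: "h \<in> borel_measurable M" and h_bdd: "\<And>x. \<bar>h x\<bar> \<le> B"
    and near: "\<And>x. dist x x0 < r \<Longrightarrow> \<bar>h x - h x0\<bar> \<le> e" and "0 \<le> e"
  shows "dist (\<integral>x. h x * p x \<partial>M) (h x0) \<le> e + 2 * B * (\<integral>x. p x * indicator (- ball x0 r) x \<partial>M)"
proof -
  have p: "\<And>x. 0 \<le> p x" "integrable M p" "(\<integral>x. p x \<partial>M) = 1"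
    using p by (auto simp: prob_density_def)
  have "- ball x0 r \<in> sets M"
    unfolding assms(1) by (intro borel_closed closed_Compl open_ball)
  then have int_far: "integrable M (\<lambda>x. p x * indicator (- ball x0 r) x)"
    using p(2) by (rule integrable_real_mult_indicator)
  have int_h: "integrable M (\<lambda>x. h x * p x)"
    using p(2) h_meas h_bdd by (rule integrable_bounded_mult)
  have "dist (\<integral>x. h x * p x \<partial>M) (h x0) = \<bar>\<integral>x. h x * p x - h x0 * p x \<partial>M\<bar>"
    using int_h p(2,3) by (simp add: dist_real_def)
  also have "\<dots> \<le> (\<integral>x. e * p x + 2 * B * (p x * indicator (- ball x0 r) x) \<partial>M)"
  proof (rule abs_integral_le_integral)
    show "integrable M (\<lambda>x. h x * p x - h x0 * p x)" using int_h p(2) by simp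
    show "integrable M (\<lambda>x. e * p x + 2 * B * (p x * indicator (- ball x0 r) x))"
      using p(2) int_far by simp
    fix x
    have "\<bar>h x - h x0\<bar> \<le> e + 2 * B * indicator (- ball x0 r) x"
    proof (cases "x \<in> ball x0 r")
      case True
      then show ?thesis using near[of x] by (simp add: dist_commute)
    next
      case False
      have "\<bar>h x - h x0\<bar> \<le> \<bar>h x\<bar> + \<bar>h x0\<bar>" by (rule abs_triangle_ineq4)
      with h_bdd[of x] h_bdd[of x0] False \<open>0 \<le> e\<close> show ?thesis by simp
    qed
    from mult_right_mono[OF this p(1)[of x]]
    have "\<bar>h x - h x0\<bar> * p x \<le> e * p x + 2 * B * (p x * indicator (- ball x0 r) x)"
      by (simp add: algebra_simps)
    moreover have "\<bar>h x * p x - h x0 * p x\<bar> = \<bar>h x - h x0\<bar> * p x"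
      using p(1)[of x] by (simp add: abs_mult left_diff_distrib[symmetric])
    ultimately show "\<bar>h x * p x - h x0 * p x\<bar> \<le> e * p x + 2 * B * (p x * indicator (- ball x0 r) x)"
      by simp
  qed
  also have "\<dots> = e + 2 * B * (\<integral>x. p x * indicator (- ball x0 r) x \<partial>M)"
    using p(2,3) int_far by simp
  finally show ?thesis .
qed

lemma integral_tendsto_of_concentrating:
  fixes p :: "'c \<Rightarrow> 'a::metric_space \<Rightarrow> real" and h :: "'a \<Rightarrow> real"
  assumes sets_M: "sets M = sets borel"
    and dens: "\<forall>\<^sub>F c in F. prob_density M (p c)"
    and tail: "\<And>r. r > 0 \<Longrightarrow> ((\<lambda>c. \<integral>x. p c x * indicator (- ball x0 r) x \<partial>M) \<longlongrightarrow> 0) F"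
    and h_meas: "h \<in> borel_measurable M" and h_bdd: "\<And>x. \<bar>h x\<bar> \<le> B"
    and h_cont: "isCont h x0"
  shows "((\<lambda>c. \<integral>x. h x * p c x \<partial>M) \<longlongrightarrow> h x0) F"
proof (rule tendstoI)
  fix \<epsilon> :: real assume "\<epsilon> > 0"
  have "B \<ge> 0" using abs_ge_zero h_bdd by (rule order_trans)
  obtain r where "r > 0" and r: "\<And>x. dist x x0 < r \<Longrightarrow> \<bar>h x - h x0\<bar> < \<epsilon> / 2"
    using h_cont \<open>\<epsilon> > 0\<close> unfolding continuous_at_eps_delta dist_real_def
    by (metis half_gt_zero)
  define \<tau> where "\<tau> = \<epsilon> / (4 * (B + 1))"
  have \<tau>: "\<tau> > 0" "2 * B * \<tau> < \<epsilon> / 2"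
    using \<open>\<epsilon> > 0\<close> \<open>B \<ge> 0\<close> by (auto simp: \<tau>_def field_simps)
  from tendstoD[OF tail[OF \<open>r > 0\<close>] \<tau>(1)] dens
  show "\<forall>\<^sub>F c in F. dist (\<integral>x. h x * p c x \<partial>M) (h x0) < \<epsilon>"
  proof eventually_elim
    case (elim c)
    define T where "T = (\<integral>x. p c x * indicator (- ball x0 r) x \<partial>M)"
    have "T < \<tau>" using elim(1) by (simp add: T_def dist_real_def)
    have "dist (\<integral>x. h x * p c x \<partial>M) (h x0) \<le> \<epsilon> / 2 + 2 * B * T"
      unfolding T_def using sets_M elim(2) h_meas h_bdd
      by (rule dist_integral_prob_density_le) (use r \<open>\<epsilon> > 0\<close> in \<open>auto intro: less_imp_le\<close>)
    also have "\<dots> < \<epsilon>"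
      using \<open>T < \<tau>\<close> \<tau>(2) \<open>B \<ge> 0\<close> mult_left_mono[of T \<tau> "2 * B"] by simp
    finally show ?case .
  qed
qed

lemma measure_ball_mult_le_integral:
  fixes g :: "'a::euclidean_space \<Rightarrow> real"
  assumes "integrable lborel g" "\<And>t. 0 \<le> g t" "\<And>t. t \<in> ball t0 s \<Longrightarrow> k \<le> g t"
  shows "k * measure lborel (ball t0 s) \<le> (\<integral>t. g t \<partial>lborel)"
proof -
  have "k * measure lborel (ball t0 s) = (\<integral>t. indicator (ball t0 s) t * k \<partial>lborel)"
    by simp
  also have "\<dots> \<le> (\<integral>t. g t \<partial>lborel)"
  proof (rule integral_mono)
    show "integrable lborel (\<lambda>t. indicator (ball t0 s) t * k)"
      by (intro integrable_mult_left integrable_real_indicator)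
         (auto simp: emeasure_lborel_ball_finite[unfolded infinity_ennreal_def])
    show "indicator (ball t0 s) t * k \<le> g t" for t
      using assms(2,3)[of t] by (cases "t \<in> ball t0 s") auto
  qed (fact assms(1))
  finally show ?thesis .
qed

section \<open>Concentration of the quasi-posterior\<close>

definition well_separated_min :: "('a::metric_space \<Rightarrow> real) \<Rightarrow> 'a \<Rightarrow> bool" where
  "well_separated_min Q t0 \<longleftrightarrow> (\<forall>r>0. \<exists>\<kappa>>0. \<forall>t. r \<le> dist t t0 \<longrightarrow> Q t0 + \<kappa> \<le> Q t)"

lemma thin_tail_ratio_at_right:
  fixes f :: "real \<Rightarrow> real"
  assumes f_thin: "\<And>a. a > 1 \<Longrightarrow> ((\<lambda>u. f (a * u) / f u) \<longlongrightarrow> 0) at_top"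
    and "0 < u1" "u1 < u2"
  shows "((\<lambda>c. f (u2 / c) / f (u1 / c)) \<longlongrightarrow> 0) (at_right 0)"
proof -
  have "1 < u2 / u1" using assms(2,3) by simp
  moreover have "filterlim (\<lambda>c. u1 / c) at_top (at_right 0)"
    unfolding divide_inverse
    by (rule filterlim_tendsto_pos_mult_at_top[OF tendsto_const \<open>0 < u1\<close> filterlim_inverse_at_top_right])
  ultimately have "((\<lambda>c. f (u2 / u1 * (u1 / c)) / f (u1 / c)) \<longlongrightarrow> 0) (at_right 0)"
    by (rule filterlim_compose[OF f_thin])
  with \<open>0 < u1\<close> show ?thesis by simp
qed

locale quasi_posterior =
  fixes prior Q :: "'a::euclidean_space \<Rightarrow> real" and f :: "real \<Rightarrow> real"
  assumes prior_cont: "continuous_on UNIV prior"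
    and prior_nonneg: "\<And>t. 0 \<le> prior t"
    and prior_integrable: "integrable lborel prior"
    and Q_cont: "continuous_on UNIV Q"
    and Q_nonneg: "\<And>t. 0 \<le> Q t"
    and f_cont: "continuous_on {0..} f"
    and f_pos: "\<And>u. 0 \<le> u \<Longrightarrow> 0 < f u"
    and f_antimono: "\<And>u v. 0 \<le> u \<Longrightarrow> u \<le> v \<Longrightarrow> f v \<le> f u"
begin

definition unnorm_posterior :: "real \<Rightarrow> 'a \<Rightarrow> real" where
  "unnorm_posterior c t = prior t * f (Q t / c)"

definition posterior :: "real \<Rightarrow> 'a \<Rightarrow> real" where
  "posterior c t = unnorm_posterior c t / (\<integral>s. unnorm_posterior c s \<partial>lborel)"

lemma unnorm_posterior_nonneg: "0 < c \<Longrightarrow> 0 \<le> unnorm_posterior c t"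
  using prior_nonneg f_pos[of "Q t / c"] Q_nonneg[of t] by (simp add: unnorm_posterior_def)

lemma unnorm_posterior_le:
  assumes "0 < c" "0 \<le> u" "u \<le> Q t"
  shows "unnorm_posterior c t \<le> f (u / c) * prior t"
proof -
  have "f (Q t / c) \<le> f (u / c)"
    using assms by (intro f_antimono divide_right_mono) auto
  then show ?thesis
    unfolding unnorm_posterior_def using prior_nonneg[of t] by (simp add: mult_left_mono mult.commute)
qed

lemma unnorm_posterior_measurable: "0 < c \<Longrightarrow> unnorm_posterior c \<in> borel_measurable lborel"
proof -
  assume "0 < c"
  then have "continuous_on UNIV (\<lambda>t. f (Q t / c))"
    using Q_nonneg by (intro continuous_on_compose2[OF f_cont] continuous_intros Q_cont) auto
  then show ?thesis
    unfolding unnorm_posterior_def using prior_cont by (auto intro!: borel_measurable_continuous_onI continuous_intros)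
qed

lemma unnorm_posterior_integrable:
  assumes "0 < c"
  shows "integrable lborel (unnorm_posterior c)"
proof (rule Bochner_Integration.integrable_bound)
  show "integrable lborel (\<lambda>t. f 0 * prior t)" using prior_integrable by simp
  show "unnorm_posterior c \<in> borel_measurable lborel" using assms by (rule unnorm_posterior_measurable)
  have "unnorm_posterior c t \<le> f 0 * prior t" for t
    using unnorm_posterior_le[OF assms order_refl Q_nonneg] by simp
  then show "AE t in lborel. norm (unnorm_posterior c t) \<le> norm (f 0 * prior t)"
    using unnorm_posterior_nonneg[OF assms] by (intro AE_I2) (metis abs_ge_self abs_of_nonneg order_trans real_norm_def)
qed

lemma integral_unnorm_posterior_lower_bound:
  assumes "0 < prior t0" "Q t0 < u"
  obtains C where "0 < C" "\<And>c. 0 < c \<Longrightarrow> C * f (u / c) \<le> (\<integral>t. unnorm_posterior c t \<partial>lborel)"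
proof -
  have "(prior \<longlongrightarrow> prior t0) (nhds t0)" "(Q \<longlongrightarrow> Q t0) (nhds t0)"
    using prior_cont Q_cont
    by (simp_all add: continuous_on_eq_continuous_at isCont_def tendsto_at_iff_tendsto_nhds)
  then have "\<forall>\<^sub>F t in nhds t0. prior t0 / 2 < prior t \<and> Q t < u"
    using assms by (intro eventually_conj order_tendstoD) auto
  then obtain s where "0 < s" and s: "\<And>t. t \<in> ball t0 s \<Longrightarrow> prior t0 / 2 \<le> prior t \<and> Q t \<le> u"
    unfolding eventually_nhds_metric by (force simp: dist_commute)
  define C where "C = prior t0 / 2 * measure lborel (ball t0 s)"
  have "0 < C" using assms(1) content_ball_pos[OF \<open>0 < s\<close>] by (simp add: C_def)
  moreover have "C * f (u / c) \<le> (\<integral>t. unnorm_posterior c t \<partial>lborel)" if "0 < c" for c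
  proof -
    have "prior t0 / 2 * f (u / c) * measure lborel (ball t0 s) \<le> (\<integral>t. unnorm_posterior c t \<partial>lborel)"
    proof (rule measure_ball_mult_le_integral)
      show "integrable lborel (unnorm_posterior c)" using \<open>0 < c\<close> by (rule unnorm_posterior_integrable)
      show "0 \<le> unnorm_posterior c t" for t using \<open>0 < c\<close> by (rule unnorm_posterior_nonneg)
      fix t assume "t \<in> ball t0 s"
      have "prior t0 / 2 \<le> prior t" "f (u / c) \<le> f (Q t / c)"
        using s[OF \<open>t \<in> ball t0 s\<close>] \<open>0 < c\<close> Q_nonneg[of t] by (auto intro!: f_antimono divide_right_mono)
      then show "prior t0 / 2 * f (u / c) \<le> unnorm_posterior c t"
        unfolding unnorm_posterior_def using prior_nonneg[of t] f_pos[of "u / c"] \<open>0 < c\<close> assms Q_nonneg[of t0]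
        by (intro mult_mono) auto
    qed
    then show ?thesis by (simp add: C_def mult_ac)
  qed
  ultimately show ?thesis by (rule that)
qed

lemma integral_unnorm_posterior_pos:
  assumes "0 < prior t0" "0 < c"
  shows "0 < (\<integral>t. unnorm_posterior c t \<partial>lborel)"
proof -
  obtain C where "0 < C" and C: "C * f ((Q t0 + 1) / c) \<le> (\<integral>t. unnorm_posterior c t \<partial>lborel)"
    using integral_unnorm_posterior_lower_bound[OF assms(1), of "Q t0 + 1"] assms(2) by auto
  have "0 < f ((Q t0 + 1) / c)"
    using Q_nonneg[of t0] assms(2) by (intro f_pos) simp
  with \<open>0 < C\<close> have "0 < C * f ((Q t0 + 1) / c)" by (rule mult_pos_pos)
  with C show ?thesis by linarith
qed

lemma prob_density_posterior:
  assumes "0 < prior t0" "0 < c"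
  shows "prob_density lborel (posterior c)"
  unfolding prob_density_def posterior_def[abs_def]
  using integral_unnorm_posterior_pos[OF assms] unnorm_posterior_nonneg[OF assms(2)] unnorm_posterior_integrable[OF assms(2)]
  by (simp add: integral_divide_zero)

lemma tail_integral_unnorm_posterior_le:
  assumes "0 < c" "0 \<le> u" and far: "\<And>t. t \<notin> ball t0 r \<Longrightarrow> u \<le> Q t"
  shows "(\<integral>t. unnorm_posterior c t * indicator (- ball t0 r) t \<partial>lborel) \<le> f (u / c) * (\<integral>t. prior t \<partial>lborel)"
proof -
  have "(\<integral>t. unnorm_posterior c t * indicator (- ball t0 r) t \<partial>lborel) \<le> (\<integral>t. f (u / c) * prior t \<partial>lborel)"
  proof (rule integral_mono)
    show "integrable lborel (\<lambda>t. unnorm_posterior c t * indicator (- ball t0 r) t)"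
      using unnorm_posterior_integrable[OF assms(1)] by (rule integrable_real_mult_indicator[rotated]) simp
    show "integrable lborel (\<lambda>t. f (u / c) * prior t)" using prior_integrable by simp
    fix t
    show "unnorm_posterior c t * indicator (- ball t0 r) t \<le> f (u / c) * prior t"
    proof (cases "t \<in> ball t0 r")
      case True
      then show ?thesis
        using prior_nonneg[of t] f_pos[of "u / c"] assms(1,2) by simp
    next
      case False
      then show ?thesis using unnorm_posterior_le[OF assms(1,2) far] by simp
    qed
  qed
  then show ?thesis by simp
qed

lemma posterior_tail_le:
  assumes "0 < c" "0 < C" "0 \<le> u1" "0 \<le> u2"
    and C: "C * f (u1 / c) \<le> (\<integral>t. unnorm_posterior c t \<partial>lborel)"
    and far: "\<And>t. t \<notin> ball t0 r \<Longrightarrow> u2 \<le> Q t"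
  shows "(\<integral>t. posterior c t * indicator (- ball t0 r) t \<partial>lborel)
           \<le> (\<integral>t. prior t \<partial>lborel) / C * (f (u2 / c) / f (u1 / c))"
proof -
  have "0 < f (u1 / c)" using assms(1,3) by (intro f_pos) simp
  have "(\<integral>t. posterior c t * indicator (- ball t0 r) t \<partial>lborel)
      = (\<integral>t. unnorm_posterior c t * indicator (- ball t0 r) t \<partial>lborel) / (\<integral>t. unnorm_posterior c t \<partial>lborel)"
    unfolding posterior_def by simp
  also have "\<dots> \<le> f (u2 / c) * (\<integral>t. prior t \<partial>lborel) / (C * f (u1 / c))"
  proof (rule frac_le)
    show "(\<integral>t. unnorm_posterior c t * indicator (- ball t0 r) t \<partial>lborel) \<le> f (u2 / c) * (\<integral>t. prior t \<partial>lborel)"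
      using assms(1,4) far by (rule tail_integral_unnorm_posterior_le)
    show "0 \<le> f (u2 / c) * (\<integral>t. prior t \<partial>lborel)"
      using f_pos[of "u2 / c"] assms(1,4) prior_nonneg by simp
    show "0 < C * f (u1 / c)" using \<open>0 < C\<close> \<open>0 < f (u1 / c)\<close> by simp
  qed (fact C)
  also have "\<dots> = (\<integral>t. prior t \<partial>lborel) / C * (f (u2 / c) / f (u1 / c))"
    by simp
  finally show ?thesis .
qed

lemma posterior_tail_tendsto_0:
  assumes "0 < prior t0" and "well_separated_min Q t0"
    and f_thin: "\<And>a. a > 1 \<Longrightarrow> ((\<lambda>u. f (a * u) / f u) \<longlongrightarrow> 0) at_top"
    and "0 < r"
  shows "((\<lambda>c. \<integral>t. posterior c t * indicator (- ball t0 r) t \<partial>lborel) \<longlongrightarrow> 0) (at_right 0)"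
proof -
  obtain \<kappa> where "0 < \<kappa>" and \<kappa>: "\<And>t. r \<le> dist t t0 \<Longrightarrow> Q t0 + \<kappa> \<le> Q t"
    using assms(2,4) unfolding well_separated_min_def by blast
  have far: "Q t0 + \<kappa> \<le> Q t" if "t \<notin> ball t0 r" for t
    using that by (intro \<kappa>) (simp add: dist_commute)
  have u: "0 < Q t0 + \<kappa> / 2" "Q t0 < Q t0 + \<kappa> / 2" "Q t0 + \<kappa> / 2 < Q t0 + \<kappa>"
    using Q_nonneg[of t0] \<open>0 < \<kappa>\<close> by simp_all
  obtain C where "0 < C" and C: "\<And>c. 0 < c \<Longrightarrow> C * f ((Q t0 + \<kappa> / 2) / c) \<le> (\<integral>t. unnorm_posterior c t \<partial>lborel)"
    using integral_unnorm_posterior_lower_bound[OF assms(1) u(2)] by blast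
  have "\<forall>\<^sub>F c in at_right 0. 0 \<le> (\<integral>t. posterior c t * indicator (- ball t0 r) t \<partial>lborel)"
    using eventually_at_right_less
    by (rule eventually_mono) (simp add: posterior_def unnorm_posterior_nonneg integral_unnorm_posterior_pos[OF assms(1)])
  moreover have "\<forall>\<^sub>F c in at_right 0. (\<integral>t. posterior c t * indicator (- ball t0 r) t \<partial>lborel)
      \<le> (\<integral>t. prior t \<partial>lborel) / C * (f ((Q t0 + \<kappa>) / c) / f ((Q t0 + \<kappa> / 2) / c))"
    using eventually_at_right_less
    by (rule eventually_mono) (use \<open>0 < C\<close> u C far in \<open>intro posterior_tail_le; auto\<close>)
  moreover have "((\<lambda>c. (\<integral>t. prior t \<partial>lborel) / C * (f ((Q t0 + \<kappa>) / c) / f ((Q t0 + \<kappa> / 2) / c)))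
      \<longlongrightarrow> 0) (at_right 0)"
    using tendsto_mult_left[OF thin_tail_ratio_at_right[OF f_thin u(1,3)], of "(\<integral>t. prior t \<partial>lborel) / C"]
    by simp
  ultimately show ?thesis
    by (rule tendsto_sandwich[OF _ _ tendsto_const])
qed

lemma integral_posterior_tendsto:
  assumes "0 < prior t0" and "well_separated_min Q t0"
    and f_thin: "\<And>a. a > 1 \<Longrightarrow> ((\<lambda>u. f (a * u) / f u) \<longlongrightarrow> 0) at_top"
    and "continuous_on UNIV h" "\<And>t. \<bar>h t\<bar> \<le> B"
  shows "((\<lambda>c. \<integral>t. h t * posterior c t \<partial>lborel) \<longlongrightarrow> h t0) (at_right 0)"
proof (rule integral_tendsto_of_concentrating[OF sets_lborel])
  show "\<forall>\<^sub>F c in at_right 0. prob_density lborel (posterior c)"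
    using eventually_at_right_less by (rule eventually_mono) (rule prob_density_posterior[OF assms(1)])
  show "((\<lambda>c. \<integral>t. posterior c t * indicator (- ball t0 r) t \<partial>lborel) \<longlongrightarrow> 0) (at_right 0)" if "0 < r" for r
    using assms(1,2) f_thin that by (rule posterior_tail_tendsto_0)
  show "h \<in> borel_measurable lborel" "isCont h t0"
    using \<open>continuous_on UNIV h\<close> by (auto intro: borel_measurable_continuous_onI simp: continuous_on_eq_continuous_at)
qed (fact assms(5))

lemma uniform_limit_posterior_risk:
  fixes L :: "'b::metric_space \<Rightarrow> 'a \<Rightarrow> real"
  assumes "0 < prior t0" and "well_separated_min Q t0"
    and f_thin: "\<And>a. a > 1 \<Longrightarrow> ((\<lambda>u. f (a * u) / f u) \<longlongrightarrow> 0) at_top"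
    and "compact A"
    and L_cont: "\<And>a. a \<in> A \<Longrightarrow> continuous_on UNIV (L a)"
    and L_bdd: "\<And>a t. a \<in> A \<Longrightarrow> \<bar>L a t\<bar> \<le> B"
    and L_lip: "\<And>t. lipschitz_on lam A (\<lambda>a. L a t)"
  shows "uniform_limit A (\<lambda>c a. \<integral>t. L a t * posterior c t \<partial>lborel) (\<lambda>a. L a t0) (at_right 0)"
proof (rule uniform_limit_equi_lipschitz[OF \<open>compact A\<close> _ L_lip])
  have L_meas: "L a \<in> borel_measurable lborel" if "a \<in> A" for a
    using L_cont[OF that] by (auto intro: borel_measurable_continuous_onI)
  show "\<forall>\<^sub>F c in at_right 0. lipschitz_on lam A (\<lambda>a. \<integral>t. L a t * posterior c t \<partial>lborel)"
    using eventually_at_right_less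
    by (rule eventually_mono) (use L_meas L_bdd L_lip prob_density_posterior[OF assms(1)] in
        \<open>intro lipschitz_on_integral_prob_density; auto\<close>)
  show "((\<lambda>c. \<integral>t. L a t * posterior c t \<partial>lborel) \<longlongrightarrow> L a t0) (at_right 0)" if "a \<in> A" for a
    using assms(1,2) f_thin L_cont[OF that] L_bdd[OF that] by (rule integral_posterior_tendsto)
qed

end

section \<open>The minimum-distance objective\<close>

lemma inner_matrix_vector_transpose:
  fixes X :: "real^'p^'k"
  shows "(X *v z) \<bullet> u = z \<bullet> (transpose X *v u)"
  by (metis dot_lmul_matrix inner_commute transpose_matrix_vector)

lemma inner_matrix_vector_sym:
  fixes W :: "real^'k^'k"
  assumes "transpose W = W"
  shows "e \<bullet> (W *v v) = v \<bullet> (W *v e)"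
  using inner_matrix_vector_transpose[of W v e] assms by (simp add: inner_commute)

lemma quadratic_form_pos:
  fixes X :: "real^'p^'k" and W :: "real^'k^'k"
  assumes "rank X = CARD('p)" and W_pd: "\<And>\<eta>. \<eta> \<noteq> 0 \<Longrightarrow> \<eta> \<bullet> (W *v \<eta>) > 0"
    and "z \<noteq> 0"
  shows "(X *v z) \<bullet> (W *v (X *v z)) > 0"
proof -
  have "inj ((*v) X)" using assms(1) full_rank_injective by blast
  then have "X *v z \<noteq> 0" using \<open>z \<noteq> 0\<close> by (metis injD matrix_vector_mult_0_right)
  then show ?thesis by (rule W_pd)
qed

lemma invertible_normal_matrix:
  fixes X :: "real^'p^'k" and W :: "real^'k^'k"
  assumes "rank X = CARD('p)" and "\<And>\<eta>. \<eta> \<noteq> 0 \<Longrightarrow> \<eta> \<bullet> (W *v \<eta>) > 0"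
  shows "invertible (transpose X ** W ** X)"
proof -
  have "z = 0" if "(transpose X ** W ** X) *v z = 0" for z
  proof -
    have "(X *v z) \<bullet> (W *v (X *v z)) = z \<bullet> ((transpose X ** W ** X) *v z)"
      by (simp add: inner_matrix_vector_transpose matrix_vector_mul_assoc matrix_mul_assoc)
    with that have "(X *v z) \<bullet> (W *v (X *v z)) = 0" by simp
    with quadratic_form_pos[OF assms] show "z = 0" by force
  qed
  then show ?thesis
    by (simp add: invertible_left_inverse matrix_left_invertible_ker)
qed

lemma matrix_mul_matrix_inv:
  fixes A :: "'a::semiring_1^'n^'n"
  assumes "invertible A"
  shows "A ** matrix_inv A = mat 1"
  using assms unfolding invertible_def matrix_inv_def by (rule someI_ex[THEN conjunct1])

lemma QW_thetaW_add:
  fixes X :: "real^'p^'k" and W :: "real^'k^'k"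
  assumes "rank X = CARD('p)" and "\<And>\<eta>. \<eta> \<noteq> 0 \<Longrightarrow> \<eta> \<bullet> (W *v \<eta>) > 0"
    and "transpose W = W"
  shows "QW Y X W (thetaW Y X W + z) = QW Y X W (thetaW Y X W) + (X *v z) \<bullet> (W *v (X *v z))"
proof -
  define M where "M = transpose X ** W ** X"
  define t0 where "t0 = thetaW Y X W"
  define e where "e = Y - X *v t0"
  define v where "v = X *v z"
  define b where "b = transpose X *v (W *v Y)"
  have "M ** matrix_inv M = mat 1"
    using invertible_normal_matrix[OF assms(1,2)] unfolding M_def by (rule matrix_mul_matrix_inv)
  moreover have "t0 = matrix_inv M *v b"
    by (simp add: t0_def thetaW_def M_def b_def)
  ultimately have "M *v t0 = b"
    by (simp add: matrix_vector_mul_assoc)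
  then have normal_eq: "transpose X *v (W *v e) = 0"
    by (simp add: e_def M_def b_def matrix_vector_mult_diff_distrib matrix_vector_mul_assoc matrix_mul_assoc)
  have "v \<bullet> (W *v e) = 0"
    by (simp only: v_def inner_matrix_vector_transpose normal_eq inner_zero_right)
  moreover have "e \<bullet> (W *v v) = v \<bullet> (W *v e)"
    using assms(3) by (rule inner_matrix_vector_sym)
  moreover have "Y - X *v (t0 + z) = e - v"
    by (simp add: e_def v_def matrix_vector_right_distrib)
  ultimately show ?thesis
    unfolding t0_def[symmetric] v_def[symmetric] QW_def e_def[symmetric]
    by (simp add: matrix_vector_mult_diff_distrib inner_diff_left inner_diff_right)
qed

lemma QW_continuous: "continuous_on UNIV (QW Y X W)"
  unfolding QW_def
  by (intro continuous_intros bounded_linear.continuous_on[OF matrix_vector_mul_bounded_linear])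

lemma QW_nonneg:
  assumes "\<And>\<eta>. \<eta> \<noteq> 0 \<Longrightarrow> \<eta> \<bullet> (W *v \<eta>) > 0"
  shows "0 \<le> QW Y X W t"
  unfolding QW_def using assms[of "Y - X *v t"] by (cases "Y - X *v t = 0") auto

lemma quadratic_form_coercive:
  fixes X :: "real^'p^'k" and W :: "real^'k^'k"
  assumes "rank X = CARD('p)" and "\<And>\<eta>. \<eta> \<noteq> 0 \<Longrightarrow> \<eta> \<bullet> (W *v \<eta>) > 0"
  obtains m where "0 < m" "\<And>z. m * (norm z)\<^sup>2 \<le> (X *v z) \<bullet> (W *v (X *v z))"
proof -
  define q where "q z = (X *v z) \<bullet> (W *v (X *v z))" for z
  have q_scaleR: "q (c *\<^sub>R z) = c\<^sup>2 * q z" for c z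
    by (simp add: q_def matrix_vector_mult_scaleR power2_eq_square)
  have "continuous_on UNIV q"
    unfolding q_def by (intro continuous_intros bounded_linear.continuous_on[OF matrix_vector_mul_bounded_linear])
  then have "\<exists>z0\<in>sphere 0 1. \<forall>y\<in>sphere 0 1. q z0 \<le> q y"
    by (intro continuous_attains_inf) (auto intro: continuous_on_subset)
  then obtain z0 where z0: "z0 \<in> sphere 0 1" "\<And>y. y \<in> sphere 0 1 \<Longrightarrow> q z0 \<le> q y"
    by blast
  have "z0 \<noteq> 0" using z0(1) by auto
  then have "0 < q z0"
    using quadratic_form_pos[OF assms(1,2)] by (simp add: q_def)
  moreover have "q z0 * (norm z)\<^sup>2 \<le> q z" for z
  proof (cases "z = 0")
    case False
    have "q z = (norm z)\<^sup>2 * q (z /\<^sub>R norm z)"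
      using q_scaleR[of "norm z" "z /\<^sub>R norm z"] False by simp
    moreover have "q z0 \<le> q (z /\<^sub>R norm z)"
      using False by (intro z0(2)) simp
    ultimately show ?thesis by (simp add: mult.commute[of "q z0"] mult_left_mono)
  qed (simp add: q_def)
  ultimately show ?thesis using that[of "q z0"] by (simp add: q_def)
qed

lemma well_separated_min_QW_thetaW:
  fixes X :: "real^'p^'k" and W :: "real^'k^'k"
  assumes "rank X = CARD('p)" and "\<And>\<eta>. \<eta> \<noteq> 0 \<Longrightarrow> \<eta> \<bullet> (W *v \<eta>) > 0"
    and "transpose W = W"
  shows "well_separated_min (QW Y X W) (thetaW Y X W)"
  unfolding well_separated_min_def
proof (intro allI impI)
  fix r :: real assume "0 < r"
  obtain m where "0 < m" and m: "\<And>z. m * (norm z)\<^sup>2 \<le> (X *v z) \<bullet> (W *v (X *v z))"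
    using quadratic_form_coercive[OF assms(1,2)] by blast
  show "\<exists>\<kappa>>0. \<forall>t. r \<le> dist t (thetaW Y X W) \<longrightarrow> QW Y X W (thetaW Y X W) + \<kappa> \<le> QW Y X W t"
  proof (intro exI conjI allI impI)
    show "0 < m * r\<^sup>2" using \<open>0 < m\<close> \<open>0 < r\<close> by simp
    fix t assume "r \<le> dist t (thetaW Y X W)"
    then have "m * r\<^sup>2 \<le> m * (norm (t - thetaW Y X W))\<^sup>2"
      using \<open>0 < m\<close> \<open>0 < r\<close> by (intro mult_left_mono power_mono) (auto simp: dist_norm)
    also have "\<dots> \<le> QW Y X W t - QW Y X W (thetaW Y X W)"
      using m[of "t - thetaW Y X W"] QW_thetaW_add[OF assms, of Y "t - thetaW Y X W"] by simp
    finally show "QW Y X W (thetaW Y X W) + m * r\<^sup>2 \<le> QW Y X W t" by simp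
  qed
qed

theorem proposition3:
  fixes Y :: "real^'k" and X :: "real^'p^'k" and W :: "real^'k^'k"
    and f :: "real \<Rightarrow> real" and prior :: "real^'p \<Rightarrow> real"
    and A :: "'a::metric_space set" and L :: "'a \<Rightarrow> real^'p \<Rightarrow> real"
    and \<delta> :: "real \<Rightarrow> 'a" and a0 :: 'a
  assumes kp: "CARD('k) > CARD('p)"
    and X_rank: "rank X = CARD('p)"
    and W_sym: "transpose W = W"
    and W_pd: "\<And>\<eta>. \<eta> \<noteq> 0 \<Longrightarrow> \<eta> \<bullet> (W *v \<eta>) > 0"
    and f_cont: "continuous_on {0..} f"
    and f_pos: "\<And>u. u \<ge> 0 \<Longrightarrow> f u > 0"
    and f_mono: "\<And>u v. 0 \<le> u \<Longrightarrow> u \<le> v \<Longrightarrow> f v \<le> f u"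
    and f_thin: "\<And>a. a > 1 \<Longrightarrow> ((\<lambda>u. f (a * u) / f u) \<longlongrightarrow> 0) at_top"
    and f_int: "integrable lborel (\<lambda>\<eta>::real^'k. f (\<eta> \<bullet> (W *v \<eta>)))"
    and prior_cont: "continuous_on UNIV prior"
    and prior_nonneg: "\<And>\<theta>. prior \<theta> \<ge> 0"
    and prior_prob: "(prior has_integral 1) UNIV"
    and prior_pos: "prior (thetaW Y X W) > 0"
    and A_compact: "compact A"
    and L_bdd: "\<exists>B. \<forall>a\<in>A. \<forall>\<theta>. \<bar>L a \<theta>\<bar> \<le> B"
    and L_lip: "\<exists>lam>0. \<forall>a\<in>A. \<forall>a'\<in>A. \<forall>\<theta>. \<bar>L a \<theta> - L a' \<theta>\<bar> \<le> lam * dist a a'"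
    and L_cont: "\<And>a. a \<in> A \<Longrightarrow> continuous_on UNIV (L a)"
    and L_uniq: "\<And>\<theta>. \<exists>!a. a \<in> A \<and> (\<forall>a'\<in>A. L a \<theta> \<le> L a' \<theta>)"
    and \<delta>_mem: "\<And>c. c > 0 \<Longrightarrow> \<delta> c \<in> A"
    and \<delta>_min: "\<And>c a. c > 0 \<Longrightarrow> a \<in> A \<Longrightarrow>
                   post_risk L f prior Y X W c (\<delta> c) \<le> post_risk L f prior Y X W c a"
    and a0_mem: "a0 \<in> A"
    and a0_min: "\<And>a. a \<in> A \<Longrightarrow> L a0 (thetaW Y X W) \<le> L a (thetaW Y X W)"
  shows "(\<delta> \<longlongrightarrow> a0) (at_right 0)"
proof -
  obtain B where B: "\<And>a t. a \<in> A \<Longrightarrow> \<bar>L a t\<bar> \<le> B" using L_bdd by blast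
  obtain lam where lam: "\<And>a b t. a \<in> A \<Longrightarrow> b \<in> A \<Longrightarrow> \<bar>L a t - L b t\<bar> \<le> lam * dist a b" "0 < lam"
    using L_lip by blast
  have L_lip': "lipschitz_on lam A (\<lambda>a. L a t)" for t
    using lam by (intro lipschitz_onI) (auto simp: dist_real_def)
  have "integrable lborel prior"
    using borel_measurable_continuous_onI[OF prior_cont] prior_nonneg prior_prob
    by (rule integrable_lborel_has_integral_nonneg)
  with prior_cont prior_nonneg f_cont f_pos f_mono interpret quasi_posterior prior "QW Y X W" f
    by unfold_locales (auto simp: QW_continuous QW_nonneg[OF W_pd])
  define t0 where "t0 = thetaW Y X W"
  have risk: "post_risk L f prior Y X W = (\<lambda>c a. \<integral>t. L a t * posterior c t \<partial>lborel)"
    by (simp add: fun_eq_iff post_risk_def post_def posterior_def unnorm_posterior_def)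
  have "uniform_limit A (post_risk L f prior Y X W) (\<lambda>a. L a t0) (at_right 0)"
    unfolding risk t0_def using prior_pos well_separated_min_QW_thetaW[OF X_rank W_pd W_sym] f_thin A_compact
      L_cont B L_lip' by (rule uniform_limit_posterior_risk)
  moreover have "\<forall>\<^sub>F c in at_right 0. \<delta> c \<in> A \<and> (\<forall>a\<in>A. post_risk L f prior Y X W c (\<delta> c) \<le> post_risk L f prior Y X W c a)"
    using eventually_at_right_less by (rule eventually_mono) (simp add: \<delta>_mem \<delta>_min)
  moreover have "a = a0" if "a \<in> A" "\<forall>b\<in>A. L a t0 \<le> L b t0" for a
    using L_uniq[of t0] that a0_mem a0_min[folded t0_def] by blast
  ultimately show ?thesis
    using tendsto_argmin_uniform_limit[OF A_compact lipschitz_on_continuous_on[OF L_lip'] _ a0_mem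
        a0_min[folded t0_def]] by blast
qed

end
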